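(* Let $q$ be a prime power. For arbitrary $u,v\in\mathbb{F}_q^3$, $|\widetilde{E}(u)\cap\widetilde{E}(v)|=(q-1)\,\rho_q(u,v)$.
   Context: $\mathbb{F}_q$ is the finite field with $q$ elements. Hamming distance $d(u,v)=|\{i:u_i\ne v_i\}|$ on $\mathbb{F}_q^3$; $B(u)=\{v:d(u,v)\le1\}$; $E(u)=\bigcup_{\lambda\in\mathbb{F}_q}B(\lambda u)$. $\mathcal{D}_q=\{(u_1,u_2,u_3)\in\mathbb{F}_q^3: u_1,u_2,u_3 \text{ pairwise distinct and nonzero}\}$, $\widetilde{B}(u)=B(u)\cap\mathcal{D}_q$, $\widetilde{E}(u)=E(u)\cap\mathcal{D}_q$. For $u,v\in\mathbb{F}_q^3$, $\rho_q(u,v)=0$ if $|\widetilde{E}(u)|=0$ or $|\widetilde{E}(v)|=0$, and otherwise $\rho_q(u,v)=\sum_{\mu\in\mathbb{F}_q^*}|\widetilde{B}(u)\cap\widetilde{B}(\mu v)|$. *)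

theory Defs
  imports "HOL-Analysis.Analysis"
begin

text \<open>Vectors of F_q^3 are modelled as 'a^3 for a finite field 'a (q = CARD('a)).\<close>

definition hdist :: "'a ^ 3 \<Rightarrow> 'a ^ 3 \<Rightarrow> nat" where
  "hdist u v = card {i. u $ i \<noteq> v $ i}"

definition smul :: "'a::times \<Rightarrow> 'a ^ 3 \<Rightarrow> 'a ^ 3" where
  "smul c u = (\<chi> i. c * u $ i)"

definition ball1 :: "'a ^ 3 \<Rightarrow> ('a ^ 3) set" where
  "ball1 u = {v. hdist u v \<le> 1}"

definition Eset :: "'a::times ^ 3 \<Rightarrow> ('a ^ 3) set" where
  "Eset u = (\<Union>c\<in>UNIV. ball1 (smul c u))"

definition Dq :: "('a::zero ^ 3) set" where
  "Dq = {u. (\<forall>i. u $ i \<noteq> 0) \<and> (\<forall>i j. i \<noteq> j \<longrightarrow> u $ i \<noteq> u $ j)}"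

definition Bt :: "'a::zero ^ 3 \<Rightarrow> ('a ^ 3) set" where
  "Bt u = ball1 u \<inter> Dq"

definition Et :: "'a::{times,zero} ^ 3 \<Rightarrow> ('a ^ 3) set" where
  "Et u = Eset u \<inter> Dq"

definition rho :: "'a::{field,finite} ^ 3 \<Rightarrow> 'a ^ 3 \<Rightarrow> nat" where
  "rho u v = (if card (Et u) = 0 \<or> card (Et v) = 0 then 0
              else (\<Sum>\<mu>\<in>UNIV - {0}. card (Bt u \<inter> Bt (smul \<mu> v))))"

end

theory Submission
  imports Defs
begin

text \<open>\<open>Et u\<close> is the disjoint union of the punctured balls \<open>Bt (c u)\<close> over \<open>c \<noteq> 0\<close>: the ball
  around \<open>0\<close> misses \<open>Dq\<close>, and two balls around distinct multiples of \<open>u\<close> would force a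
  coordinate where both agree with a point of \<open>Dq\<close>, hence where \<open>u\<close> vanishes. Scaling by
  \<open>c \<noteq> 0\<close> is an isometry preserving \<open>Dq\<close>, so the piece \<open>Bt (c u) \<inter> Bt (d v)\<close> has the size
  of \<open>Bt u \<inter> Bt ((d/c) v)\<close>; summing over \<open>c\<close> and \<open>d\<close> gives \<open>q - 1\<close> copies of \<open>\<rho>(u,v)\<close>.\<close>

lemma smul_smul: "smul c (smul d u) = smul (c * d) (u :: 'a::field ^ 3)"
  by (simp add: smul_def vec_eq_iff mult.assoc)

lemma smul_one: "smul 1 (u :: 'a::field ^ 3) = u"
  by (simp add: smul_def vec_eq_iff)

lemma inj_smul: "(c :: 'a::field) \<noteq> 0 \<Longrightarrow> inj (smul c :: 'a ^ 3 \<Rightarrow> 'a ^ 3)"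
  by (auto simp: inj_def smul_def vec_eq_iff)

lemma hdist_smul: "(c :: 'a::field) \<noteq> 0 \<Longrightarrow> hdist (smul c u) (smul c w) = hdist u w"
  by (simp add: hdist_def smul_def)

lemma smul_in_Dq_iff: "(c :: 'a::field) \<noteq> 0 \<Longrightarrow> smul c w \<in> Dq \<longleftrightarrow> w \<in> Dq"
  by (simp add: Dq_def smul_def)

lemma Bt_smul:
  assumes "(c :: 'a::field) \<noteq> 0"
  shows "Bt (smul c u) = smul c ` Bt u"
proof
  show "Bt (smul c u) \<subseteq> smul c ` Bt u"
  proof
    fix w assume w: "w \<in> Bt (smul c u)"
    have "w = smul c (smul (inverse c) w)"
      using assms by (simp add: smul_smul smul_one)
    moreover have "smul (inverse c) w \<in> Bt u"
      using w assms hdist_smul[of "inverse c" "smul c u" w] smul_in_Dq_iff[of "inverse c" w]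
      by (simp add: Bt_def ball1_def smul_smul smul_one)
    ultimately show "w \<in> smul c ` Bt u" by blast
  qed
  show "smul c ` Bt u \<subseteq> Bt (smul c u)"
    using assms by (auto simp: Bt_def ball1_def hdist_smul smul_in_Dq_iff)
qed

lemma Bt_smul_zero: "Bt (smul 0 (u :: 'a::field ^ 3)) = {}"
proof -
  have False if w: "w \<in> Dq" "hdist (smul 0 u) w \<le> 1" for w :: "'a ^ 3"
  proof -
    have "{i. smul 0 u $ i \<noteq> w $ i} = UNIV"
      using w(1) by (auto simp: Dq_def smul_def)
    thus False using w(2) by (simp add: hdist_def)
  qed
  thus ?thesis by (auto simp: Bt_def ball1_def)
qed

lemma Bt_smul_disjoint:
  assumes "(c :: 'a::field) \<noteq> d"
  shows "Bt (smul c u) \<inter> Bt (smul d u) = {}"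
proof (rule ccontr)
  assume "Bt (smul c u) \<inter> Bt (smul d u) \<noteq> {}"
  then obtain w where w: "w \<in> Dq" "hdist (smul c u) w \<le> 1" "hdist (smul d u) w \<le> 1"
    by (auto simp: Bt_def ball1_def)
  let ?X = "{i. smul c u $ i \<noteq> w $ i}" and ?Y = "{i. smul d u $ i \<noteq> w $ i}"
  have "card (?X \<union> ?Y) \<le> card ?X + card ?Y" by (rule card_Un_le)
  also have "\<dots> \<le> 2" using w by (simp add: hdist_def)
  finally have "?X \<union> ?Y \<noteq> UNIV" by auto
  then obtain i where i: "i \<notin> ?X" "i \<notin> ?Y" by blast
  hence "(c - d) * u $ i = 0" by (simp add: smul_def algebra_simps)
  hence "w $ i = 0" using assms i by (simp add: smul_def)
  thus False using w(1) by (simp add: Dq_def)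
qed

lemma Et_eq_UN_Bt_smul: "Et u = (\<Union>c \<in> UNIV - {0}. Bt (smul c (u :: 'a::field ^ 3)))"
proof -
  have "Et u = (\<Union>c. Bt (smul c u))" by (auto simp: Et_def Eset_def Bt_def)
  also have "\<dots> = (\<Union>c \<in> UNIV - {0}. Bt (smul c u))" using Bt_smul_zero[of u] by blast
  finally show ?thesis .
qed

lemma card_Bt_smul_Int_Bt_smul:
  assumes "(c :: 'a::field) \<noteq> 0"
  shows "card (Bt (smul c u) \<inter> Bt (smul (c * \<mu>) v)) = card (Bt u \<inter> Bt (smul \<mu> v))"
proof -
  have "Bt (smul c u) \<inter> Bt (smul (c * \<mu>) v) = smul c ` (Bt u \<inter> Bt (smul \<mu> v))"
    using assms by (simp add: Bt_smul smul_smul[symmetric] image_Int[OF inj_smul])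
  thus ?thesis
    using assms by (simp add: card_image inj_on_subset[OF inj_smul])
qed

lemma bij_betw_mult_nonzero:
  "(c :: 'a::field) \<noteq> 0 \<Longrightarrow> bij_betw ((*) c) (UNIV - {0}) (UNIV - {0})"
  by (rule bij_betw_byWitness[where f' = "(*) (inverse c)"]) auto

lemma card_Et_Int_Et:
  fixes u v :: "'a::{field,finite} ^ 3"
  shows "card (Et u \<inter> Et v) = (CARD('a) - 1) * (\<Sum>\<mu> \<in> UNIV - {0}. card (Bt u \<inter> Bt (smul \<mu> v)))"
proof -
  let ?S = "UNIV - {0 :: 'a}"
  let ?piece = "\<lambda>c d. Bt (smul c u) \<inter> Bt (smul d v)"
  have "Et u \<inter> Et v = (\<Union>c \<in> ?S. \<Union>d \<in> ?S. ?piece c d)"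
    unfolding Et_eq_UN_Bt_smul by blast
  also have "card \<dots> = (\<Sum>c \<in> ?S. card (\<Union>d \<in> ?S. ?piece c d))"
    by (rule card_UN_disjoint) (use Bt_smul_disjoint[of _ _ u] in auto)
  also have "\<dots> = (\<Sum>c \<in> ?S. \<Sum>d \<in> ?S. card (?piece c d))"
    by (intro sum.cong refl card_UN_disjoint) (use Bt_smul_disjoint[of _ _ v] in auto)
  also have "\<dots> = (\<Sum>c \<in> ?S. \<Sum>\<mu> \<in> ?S. card (?piece c (c * \<mu>)))"
    by (intro sum.cong refl sum.reindex_bij_betw[symmetric] bij_betw_mult_nonzero) simp
  also have "\<dots> = (\<Sum>c \<in> ?S. \<Sum>\<mu> \<in> ?S. card (Bt u \<inter> Bt (smul \<mu> v)))"
    by (simp add: card_Bt_smul_Int_Bt_smul)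
  also have "\<dots> = (CARD('a) - 1) * (\<Sum>\<mu> \<in> ?S. card (Bt u \<inter> Bt (smul \<mu> v)))"
    by (simp add: card_Diff_subset)
  finally show ?thesis .
qed

theorem corollary10:
  fixes u v :: "'a::{field,finite} ^ 3"
  shows "card (Et u \<inter> Et v) = (CARD('a) - 1) * rho u v"
proof (cases "card (Et u) = 0 \<or> card (Et v) = 0")
  case True
  hence "Et u \<inter> Et v = {}" by auto
  with True show ?thesis by (simp add: rho_def)
next
  case False
  thus ?thesis by (simp add: rho_def card_Et_Int_Et)
qed

end
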